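(* Let $\mathcal G=(V,E,\lambda)$ be a temporal graph with lifetime $T_{\max}$, let $\delta\in\mathbb N^+$, let $S\subseteq V\times[0,T_{\max}]$ be a set of seed infections, and let $L_1,L_2\subseteq V^2\times[0,T_{\max}]$ be two infection logs consistent with $S$. Then the induced infection timetables $T_i=\{(v,t)\mid (u,v,t)\in L_i\}$, $i=1,2$, are equal: $T_1=T_2$.
   Context: A temporal graph $\mathcal G=(V,E,\lambda)$ with lifetime $T_{\max}$ consists of a finite undirected static graph $(V,E)$ and a labeling $\lambda:E\to\{1,\dots,T_{\max}\}$; edge $e$ is present only at time $\lambda(e)$. Infection model with parameter $\delta$: given seed infections $S$, a seed $(u,t)$ makes $u$ infected at time $t$; otherwise a susceptible node $u$ becomes infected at time $t$ iff some neighbour $v$ infectious at time $t$ has $\lambda(uv)=t$; if several such neighbours exist, $u$ is infected by exactly one of them (any one). A node infected at time $t$ is infectious at times $t+1,\dots,t+\delta$ and resistant afterwards. The infection log of an infection chain is the set of triples $(u,v,t)$ meaning $u$ infected $v$ at time $t$ (a seed infection of $u$ at $t$ is recorded as $(u,u,t)$). A log is consistent with $S$ if some infection chain seeded with $S$ produces it. *)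

theory Defs
  imports Main
begin

definition temporal_graph :: "'a set \<Rightarrow> 'a set set \<Rightarrow> ('a set \<Rightarrow> nat) \<Rightarrow> nat \<Rightarrow> bool" where
  "temporal_graph V E lam Tmax \<longleftrightarrow>
     finite V \<and> (\<forall>e\<in>E. e \<subseteq> V \<and> card e = 2) \<and> (\<forall>e\<in>E. 1 \<le> lam e \<and> lam e \<le> Tmax)"

text \<open>Given a log L (triples (u,v,t): u infected v at time t), v is infected at time t.\<close>
definition infected_at :: "('a \<times> 'a \<times> nat) set \<Rightarrow> 'a \<Rightarrow> nat \<Rightarrow> bool" where
  "infected_at L v t \<longleftrightarrow> (\<exists>u. (u, v, t) \<in> L)"

definition infectious_at :: "nat \<Rightarrow> ('a \<times> 'a \<times> nat) set \<Rightarrow> 'a \<Rightarrow> nat \<Rightarrow> bool" where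
  "infectious_at \<delta> L u t \<longleftrightarrow> (\<exists>t'. infected_at L u t' \<and> t' < t \<and> t \<le> t' + \<delta>)"

definition susceptible_at :: "('a \<times> 'a \<times> nat) set \<Rightarrow> 'a \<Rightarrow> nat \<Rightarrow> bool" where
  "susceptible_at L v t \<longleftrightarrow> (\<forall>t'<t. \<not> infected_at L v t')"

text \<open>Each time step only depends on the log at strictly earlier times, so this
declarative description is exactly the (nondeterministic) time-stepped process:
 - seeds: every seed (v,t) is recorded as (v,v,t); self-triples occur only for seeds;
 - transmission: a non-seed triple (u,v,t) requires v susceptible at t, u infectious
   at t and an edge uv present at time t;
 - a susceptible, non-seeded node with an infectious neighbour via an edge present at
   time t does get infected at time t;
 - it is infected by exactly one such neighbour (seeds take precedence).\<close>
definition consistent_log ::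
  "'a set \<Rightarrow> 'a set set \<Rightarrow> ('a set \<Rightarrow> nat) \<Rightarrow> nat \<Rightarrow> ('a \<times> nat) set \<Rightarrow> ('a \<times> 'a \<times> nat) set \<Rightarrow> bool" where
  "consistent_log V E lam \<delta> S L \<longleftrightarrow>
     (\<forall>v t. (v, t) \<in> S \<longrightarrow> (v, v, t) \<in> L) \<and>
     (\<forall>v t. (v, v, t) \<in> L \<longrightarrow> (v, t) \<in> S) \<and>
     (\<forall>u v t. (u, v, t) \<in> L \<longrightarrow> u \<noteq> v \<longrightarrow>
        (v, t) \<notin> S \<and> susceptible_at L v t \<and> infectious_at \<delta> L u t \<and>
        {u, v} \<in> E \<and> lam {u, v} = t) \<and>
     (\<forall>v t. (v, t) \<notin> S \<longrightarrow> susceptible_at L v t \<longrightarrow>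
        (\<exists>u. infectious_at \<delta> L u t \<and> {u, v} \<in> E \<and> lam {u, v} = t) \<longrightarrow>
        infected_at L v t) \<and>
     (\<forall>u u' v t. (u, v, t) \<in> L \<longrightarrow> (u', v, t) \<in> L \<longrightarrow> u = u')"

definition timetable :: "('a \<times> 'a \<times> nat) set \<Rightarrow> ('a \<times> nat) set" where
  "timetable L = {(v, t). \<exists>u. (u, v, t) \<in> L}"

end

theory Submission
  imports Defs
begin

text \<open>Whether v becomes infected at time t depends only on the seeds and on which nodes
were infected strictly before t, since susceptibility and infectiousness at t only look
at earlier infections. By strong induction on t, any two consistent logs therefore infect
the same nodes at the same times; the only freedom, the choice of the infecting
neighbour, is invisible in the timetable.\<close>

lemma infected_at_iff_consistent_log:
  assumes "consistent_log V E lam \<delta> S L"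
  shows "infected_at L v t \<longleftrightarrow>
           (v, t) \<in> S \<or>
           (susceptible_at L v t \<and> (\<exists>u. infectious_at \<delta> L u t \<and> {u, v} \<in> E \<and> lam {u, v} = t))"
    (is "_ \<longleftrightarrow> _ \<or> ?transmitted")
proof
  assume "infected_at L v t"
  then obtain u where u: "(u, v, t) \<in> L" by (auto simp: infected_at_def)
  show "(v, t) \<in> S \<or> ?transmitted"
  proof (cases "u = v")
    case True
    with u assms show ?thesis by (simp add: consistent_log_def)
  next
    case False
    with u assms show ?thesis unfolding consistent_log_def by blast
  qed
next
  assume seed_or_transmitted: "(v, t) \<in> S \<or> ?transmitted"
  show "infected_at L v t"
  proof (cases "(v, t) \<in> S")
    case True
    with assms show ?thesis by (auto simp: consistent_log_def infected_at_def)
  next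
    case False
    with seed_or_transmitted assms show ?thesis unfolding consistent_log_def by blast
  qed
qed

lemma susceptible_at_cong:
  assumes "\<And>v t'. t' < t \<Longrightarrow> infected_at L v t' = infected_at L' v t'"
  shows "susceptible_at L v t = susceptible_at L' v t"
  using assms by (simp add: susceptible_at_def)

lemma infectious_at_cong:
  assumes "\<And>v t'. t' < t \<Longrightarrow> infected_at L v t' = infected_at L' v t'"
  shows "infectious_at \<delta> L u t = infectious_at \<delta> L' u t"
  using assms unfolding infectious_at_def by blast

lemma consistent_logs_infected_at_eq:
  assumes "consistent_log V E lam \<delta> S L" and "consistent_log V E lam \<delta> S L'"
  shows "infected_at L v t = infected_at L' v t"
proof (induction t arbitrary: v rule: less_induct)
  case (less t)
  have "susceptible_at L w t = susceptible_at L' w t" for w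
    using less by (rule susceptible_at_cong)
  moreover have "infectious_at \<delta> L w t = infectious_at \<delta> L' w t" for w
    using less by (rule infectious_at_cong)
  ultimately show ?case
    by (simp add: infected_at_iff_consistent_log[OF assms(1)]
                  infected_at_iff_consistent_log[OF assms(2)])
qed

lemma timetable_eqI:
  assumes "\<And>v t. infected_at L v t = infected_at L' v t"
  shows "timetable L = timetable L'"
  using assms by (simp add: timetable_def infected_at_def)

theorem mainTheorem5:
  fixes V :: "'a set" and E :: "'a set set" and lam :: "'a set \<Rightarrow> nat"
    and Tmax \<delta> :: nat and S :: "('a \<times> nat) set" and L1 L2 :: "('a \<times> 'a \<times> nat) set"
  assumes "temporal_graph V E lam Tmax"
    and "\<delta> \<ge> 1"
    and "S \<subseteq> V \<times> {0..Tmax}"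
    and "L1 \<subseteq> V \<times> V \<times> {0..Tmax}" and "L2 \<subseteq> V \<times> V \<times> {0..Tmax}"
    and "consistent_log V E lam \<delta> S L1" and "consistent_log V E lam \<delta> S L2"
  shows "timetable L1 = timetable L2"
  using consistent_logs_infected_at_eq[OF assms(6,7)] by (rule timetable_eqI)

end
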